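(* For $g\in W$ and $\lambda\in\Lambda$ the following are equivalent: (a) $g\in\mathcal{D}_\lambda$; (b) $g^{-1}$ is order-preserving on $R^\lambda_i$ for all $i\in[0..r+1]$; (c) $g^{-1}$ is order-preserving on $R^\lambda_i$ for all $i\in\mathbb{Z}$.
   Context: Fix integers $r\ge 0$, $d\ge 2$, set $n=2r+2$, $D=2d+2$. Let $W$ be the group of bijections $g:\mathbb{Z}\to\mathbb{Z}$ with $g(i+D)=g(i)+D$, $g(-i)=-g(i)$ for all $i$; it is a Coxeter group with simple reflections $s_0,\dots,s_d$ where ($W$-elements being determined by their values on $1,\dots,d$) $s_0(1)=-1$, $s_0(k)=k$ ($2\le k\le d$); $s_d(d)=d+2$, $s_d(k)=k$ ($k<d$); and $s_i$ ($1\le i\le d-1$) swaps $i,i+1$ and fixes the other $k\in[1..d]$; $\ell$ is the Coxeter length. Let $\Lambda$ be the set of $\lambda=(\lambda_0,\dots,\lambda_{r+1})\in\mathbb{N}^{r+2}$ with $\sum\lambda_i=d$; put $\lambda_{0,i}=\lambda_0+\dots+\lambda_i$; $W_\lambda$ is the subgroup generated by $\{s_0,\dots,s_d\}\setminus\{s_{\lambda_{0,0}},\dots,s_{\lambda_{0,r}}\}$, and $\mathcal{D}_\lambda=\{g\in W\mid \ell(wg)=\ell(w)+\ell(g)\ \forall w\in W_\lambda\}$. Define integer intervals $R_0^\lambda=[-\lambda_0..\lambda_0]$, $R_i^\lambda=(\lambda_{0,i-1}..\lambda_{0,i}]$ ($1\le i\le r$), $R^\lambda_{r+1}=[d+1-\lambda_{r+1}..d+1+\lambda_{r+1}]$,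 and extend to all $i\in\mathbb{Z}$ recursively by $R^\lambda_{-i}=\{-x\mid x\in R^\lambda_i\}$ and $R^\lambda_{i+n}=\{x+D\mid x\in R^\lambda_i\}$. *)

theory Defs
  imports Main
begin

definition bigD :: "nat \<Rightarrow> int" where "bigD d = 2 * int d + 2"

definition Wgrp :: "nat \<Rightarrow> (int \<Rightarrow> int) set" where
  "Wgrp d = {g. bij g \<and> (\<forall>i. g (i + bigD d) = g i + bigD d) \<and> (\<forall>i. g (- i) = - g i)}"

text \<open>The unique element of W determined by its values v(1),...,v(d) on 1..d.\<close>
definition Wext :: "nat \<Rightarrow> (int \<Rightarrow> int) \<Rightarrow> int \<Rightarrow> int" where
  "Wext d v x = (let D = bigD d; q = x div D; m = x mod D in
     if m = 0 then q * D
     else if m \<le> int d then q * D + v m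
     else if m = int d + 1 then q * D + int d + 1
     else q * D + D - v (D - m))"

definition sref :: "nat \<Rightarrow> nat \<Rightarrow> int \<Rightarrow> int" where
  "sref d j = Wext d (\<lambda>k.
     if j = 0 then (if k = 1 then -1 else k)
     else if j = d then (if k = int d then int d + 2 else k)
     else (if k = int j then int j + 1 else if k = int j + 1 then int j else k))"

definition wordprod :: "nat \<Rightarrow> nat list \<Rightarrow> int \<Rightarrow> int" where
  "wordprod d ws = foldr (\<circ>) (map (sref d) ws) id"

definition coxlen :: "nat \<Rightarrow> (int \<Rightarrow> int) \<Rightarrow> nat" where
  "coxlen d g = (LEAST k. \<exists>ws. length ws = k \<and> set ws \<subseteq> {0..d} \<and> wordprod d ws = g)"

text \<open>Subgroup generated by the simple reflections with indices in J
 (the generators are involutions, so it consists of the products of words in J).\<close>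
definition Wpar :: "nat \<Rightarrow> nat set \<Rightarrow> (int \<Rightarrow> int) set" where
  "Wpar d J = {wordprod d ws | ws. set ws \<subseteq> J}"

definition lam0 :: "(nat \<Rightarrow> nat) \<Rightarrow> nat \<Rightarrow> nat" where
  "lam0 lam i = (\<Sum>j\<le>i. lam j)"

definition Wlam :: "nat \<Rightarrow> nat \<Rightarrow> (nat \<Rightarrow> nat) \<Rightarrow> (int \<Rightarrow> int) set" where
  "Wlam r d lam = Wpar d ({0..d} - {lam0 lam i | i. i \<le> r})"

definition Dlam :: "nat \<Rightarrow> nat \<Rightarrow> (nat \<Rightarrow> nat) \<Rightarrow> (int \<Rightarrow> int) set" where
  "Dlam r d lam = {g \<in> Wgrp d. \<forall>w \<in> Wlam r d lam. coxlen d (w \<circ> g) = coxlen d w + coxlen d g}"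

definition Rbase :: "nat \<Rightarrow> nat \<Rightarrow> (nat \<Rightarrow> nat) \<Rightarrow> nat \<Rightarrow> int set" where
  "Rbase r d lam i =
     (if i = 0 then {- int (lam 0) .. int (lam 0)}
      else if i \<le> r then {int (lam0 lam (i - 1)) + 1 .. int (lam0 lam i)}
      else {int d + 1 - int (lam (r + 1)) .. int d + 1 + int (lam (r + 1))})"

text \<open>R_i for all integers i, via R_{-i} = -R_i and R_{i+n} = R_i + D, n = 2r+2.\<close>
definition Rset :: "nat \<Rightarrow> nat \<Rightarrow> (nat \<Rightarrow> nat) \<Rightarrow> int \<Rightarrow> int set" where
  "Rset r d lam i = (let n = 2 * int r + 2; q = i div n; m = i mod n in
     if m \<le> int r + 1 then (\<lambda>x. x + q * bigD d) ` Rbase r d lam (nat m)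
     else (\<lambda>x. - x + (q + 1) * bigD d) ` Rbase r d lam (nat (n - m)))"

definition order_pres_on :: "(int \<Rightarrow> int) \<Rightarrow> int set \<Rightarrow> bool" where
  "order_pres_on f S = (\<forall>x\<in>S. \<forall>y\<in>S. x < y \<longrightarrow> f x < f y)"

end

theory Submission
  imports Defs
begin

text \<open>The Coxeter length of \<open>g \<in> W\<close> is counted combinatorially: it is the number of orbits,
  under translation by \<open>D\<close> and \<open>(x, y) \<mapsto> (-y, -x)\<close>, of pairs \<open>x < y\<close> of points not fixed by W
  that \<open>g\<^sup>-\<^sup>1\<close> inverts. Left multiplication by the simple reflection \<open>s\<^sub>j\<close>, which swaps
  \<open>a\<^sub>j < b\<^sub>j\<close>, changes this number by \<open>+1\<close> or \<open>-1\<close> according as \<open>g\<^sup>-\<^sup>1(a\<^sub>j) < g\<^sup>-\<^sup>1(b\<^sub>j)\<close> or not.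
  Hence \<open>g \<in> Dlam r d lam\<close> forces an ascent of \<open>g\<^sup>-\<^sup>1\<close> at every generator of \<open>W\<^sub>\<lambda>\<close>, i.e. between any
  two consecutive points of a block \<open>R\<^sub>i\<close>, so \<open>g\<^sup>-\<^sup>1\<close> is increasing on the blocks; the blocks with
  \<open>i \<notin> [0..r+1]\<close> are images of these under the symmetries commuting with \<open>g\<^sup>-\<^sup>1\<close>. Conversely, \<open>W\<^sub>\<lambda>\<close>
  maps every block into itself, so if \<open>g\<^sup>-\<^sup>1\<close> is increasing on all blocks, the ascent/descent
  pattern of \<open>w g\<close> at a generator of \<open>W\<^sub>\<lambda>\<close> is that of \<open>w\<close>, and induction on a word for
  \<open>w \<in> W\<^sub>\<lambda>\<close> gives \<open>coxlen d (w \<circ> g) = coxlen d w + coxlen d g\<close>.\<close>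

section \<open>The group W\<close>

lemma bigD_pos [simp]: "bigD d > 0"
  by (simp add: bigD_def)

definition shift_equivariant :: "nat \<Rightarrow> (int \<Rightarrow> int) \<Rightarrow> bool" where
  "shift_equivariant d g \<longleftrightarrow> (\<forall>x. g (x + bigD d) = g x + bigD d)"

definition odd_fun :: "(int \<Rightarrow> int) \<Rightarrow> bool" where
  "odd_fun g \<longleftrightarrow> (\<forall>x. g (- x) = - g x)"

lemma Wgrp_iff: "g \<in> Wgrp d \<longleftrightarrow> bij g \<and> shift_equivariant d g \<and> odd_fun g"
  by (auto simp: Wgrp_def shift_equivariant_def odd_fun_def)

lemma shift_equivariant_mult:
  assumes "shift_equivariant d g"
  shows "g (x + k * bigD d) = g x + k * bigD d"
proof (induction k rule: int_induct[where k = 0])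
  case (step1 i)
  have "g (x + (i + 1) * bigD d) = g (x + i * bigD d + bigD d)"
    by (simp add: algebra_simps)
  also have "\<dots> = g (x + i * bigD d) + bigD d"
    using assms by (simp add: shift_equivariant_def)
  finally show ?case using step1 by (simp add: algebra_simps)
next
  case (step2 i)
  have "g (x + i * bigD d) = g (x + (i - 1) * bigD d + bigD d)"
    by (simp add: algebra_simps)
  also have "\<dots> = g (x + (i - 1) * bigD d) + bigD d"
    using assms by (simp add: shift_equivariant_def)
  finally show ?case using step2 by (simp add: algebra_simps)
qed simp

lemma odd_fun_zero: "odd_fun g \<Longrightarrow> g 0 = 0"
  unfolding odd_fun_def by (metis add.inverse_neutral add_eq_0_iff2 equal_neg_zero)

lemma equivariant_odd_neg_shift:
  "shift_equivariant d g \<Longrightarrow> odd_fun g \<Longrightarrow> g (- y + k * bigD d) = - g y + k * bigD d"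
  using shift_equivariant_mult[of d g "- y" k] by (simp add: odd_fun_def)

lemma equivariant_odd_mirror:
  "shift_equivariant d g \<Longrightarrow> odd_fun g \<Longrightarrow> g (bigD d - m) = bigD d - g m"
  using equivariant_odd_neg_shift[of d g m 1] by simp

lemma equivariant_odd_mid:
  "shift_equivariant d g \<Longrightarrow> odd_fun g \<Longrightarrow> g (int d + 1) = int d + 1"
  using equivariant_odd_mirror[of d g "int d + 1"] by (simp add: bigD_def)

lemma equivariant_odd_eqI:
  assumes g: "shift_equivariant d g" "odd_fun g" and h: "shift_equivariant d h" "odd_fun h"
    and agree: "\<And>k. 1 \<le> k \<Longrightarrow> k \<le> int d \<Longrightarrow> g k = h k"
  shows "g = h"
proof
  fix x
  have base: "g m = h m" if "0 \<le> m" "m < bigD d" for m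
  proof -
    have "m = 0 \<or> 1 \<le> m \<and> m \<le> int d \<or> m = int d + 1 \<or> int d + 2 \<le> m \<and> m < bigD d"
      using that by (simp add: bigD_def) linarith
    then consider "m = 0" | "1 \<le> m \<and> m \<le> int d" | "m = int d + 1" | "int d + 2 \<le> m \<and> m < bigD d"
      by blast
    then show ?thesis
    proof cases
      case 1
      then show ?thesis using odd_fun_zero[OF g(2)] odd_fun_zero[OF h(2)] by simp
    next
      case 2
      then show ?thesis using agree by simp
    next
      case 3
      then show ?thesis using equivariant_odd_mid[OF g] equivariant_odd_mid[OF h] by simp
    next
      case 4
      then have "g (bigD d - m) = h (bigD d - m)"
        using agree by (simp add: bigD_def)
      then show ?thesis
        using equivariant_odd_mirror[OF g, of "bigD d - m"] equivariant_odd_mirror[OF h, of "bigD d - m"]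
        by simp
    qed
  qed
  have "g (x mod bigD d) = h (x mod bigD d)"
    by (rule base) simp_all
  moreover have "x = x mod bigD d + (x div bigD d) * bigD d" by simp
  ultimately show "g x = h x"
    using shift_equivariant_mult[OF g(1)] shift_equivariant_mult[OF h(1)] by metis
qed

lemma Wext_shift_equivariant: "shift_equivariant d (Wext d v)"
proof -
  have "(x + bigD d) div bigD d = x div bigD d + 1" for x
    by (rule div_add_self2) (simp add: bigD_def)
  then show ?thesis
    unfolding shift_equivariant_def Wext_def Let_def by (simp add: algebra_simps)
qed

lemma Wext_odd: "odd_fun (Wext d v)"
  unfolding odd_fun_def
proof
  fix x
  define D where "D = bigD d"
  define q where "q = x div D"
  define m where "m = x mod D"
  have D: "D > 0" "D = 2 * int d + 2" by (simp_all add: D_def bigD_def)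
  have m: "0 \<le> m" "m < D" using D by (auto simp: m_def)
  show "Wext d v (- x) = - Wext d v x"
  proof (cases "m = 0")
    case True
    then have "(- x) mod D = 0" "(- x) div D = - q"
      using D by (auto simp: zmod_zminus1_eq_if zdiv_zminus1_eq_if m_def q_def)
    with True show ?thesis
      by (simp add: Wext_def Let_def D_def[symmetric] m_def[symmetric] q_def[symmetric])
  next
    case False
    then have e: "(- x) mod D = D - m" "(- x) div D = - q - 1"
      using D by (auto simp: zmod_zminus1_eq_if zdiv_zminus1_eq_if m_def q_def)
    show ?thesis
      using False m
      unfolding Wext_def Let_def D_def[symmetric] e m_def[symmetric] q_def[symmetric]
      by (simp add: D algebra_simps)
  qed
qed

lemma Wext_base: "1 \<le> k \<Longrightarrow> k \<le> int d \<Longrightarrow> Wext d v k = v k"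
  by (simp add: Wext_def Let_def bigD_def)

lemma Wgrp_id: "id \<in> Wgrp d"
  by (simp add: Wgrp_def)

lemma Wgrp_comp: "g \<in> Wgrp d \<Longrightarrow> h \<in> Wgrp d \<Longrightarrow> g \<circ> h \<in> Wgrp d"
  unfolding Wgrp_def by (auto intro: bij_comp)

lemma Wgrp_inv:
  assumes "g \<in> Wgrp d"
  shows "inv g \<in> Wgrp d"
proof -
  have b: "bij g" and p: "\<And>i. g (i + bigD d) = g i + bigD d" and o: "\<And>i. g (- i) = - g i"
    using assms by (auto simp: Wgrp_def)
  have "inv g (y + bigD d) = inv g y + bigD d" for y
    using p[of "inv g y"] b by (metis bij_inv_eq_iff)
  moreover have "inv g (- y) = - inv g y" for y
    using o[of "inv g y"] b by (metis bij_inv_eq_iff)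
  ultimately show ?thesis
    using b bij_imp_bij_inv by (auto simp: Wgrp_def)
qed

lemma Wgrp_displacement_bounded:
  assumes "g \<in> Wgrp d"
  obtains B where "\<And>x. \<bar>g x - x\<bar> \<le> B"
proof
  let ?B = "Max ((\<lambda>m. \<bar>g m - m\<bar>) ` {0..<bigD d})"
  fix x
  have x: "x = x mod bigD d + (x div bigD d) * bigD d" by simp
  have "g x = g (x mod bigD d) + (x div bigD d) * bigD d"
    using shift_equivariant_mult assms x by (metis Wgrp_iff)
  then have "\<bar>g x - x\<bar> = \<bar>g (x mod bigD d) - x mod bigD d\<bar>"
    using x by (metis add_diff_cancel_right diff_add_eq_diff_diff_swap diff_diff_eq2)
  also have "\<dots> \<le> ?B" by (intro Max_ge) auto
  finally show "\<bar>g x - x\<bar> \<le> ?B" .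
qed

text \<open>The points \<open>0\<close> and \<open>d + 1\<close> modulo \<open>D\<close> are fixed by every element of W.\<close>

definition W_fixed :: "nat \<Rightarrow> int \<Rightarrow> bool" where
  "W_fixed d x \<longleftrightarrow> bigD d dvd x \<or> bigD d dvd (x - (int d + 1))"

lemma W_fixed_cong: "bigD d dvd (x - y) \<Longrightarrow> W_fixed d x = W_fixed d y"
  unfolding W_fixed_def
  by (metis (no_types, opaque_lifting) diff_add_cancel dvd_add_right_iff add_diff_eq diff_diff_eq2)

lemma W_fixed_uminus: "W_fixed d (- x) = W_fixed d x"
proof -
  have "- x - (int d + 1) = - (x - (int d + 1)) - bigD d"
    by (simp add: bigD_def)
  then show ?thesis
    unfolding W_fixed_def by (metis dvd_diff dvd_minus_iff dvd_refl diff_add_cancel dvd_add)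
qed

lemma bigD_dvd_cases:
  assumes "bigD d dvd z"
  shows "z \<le> -2 * (2 * int d + 2) \<or> z = -(2 * int d + 2) \<or> z = 0 \<or> z = 2 * int d + 2
    \<or> z \<ge> 2 * (2 * int d + 2)"
proof -
  obtain t where z: "z = (2 * int d + 2) * t"
    using assms by (auto simp: bigD_def elim: dvdE)
  have "t \<le> -2 \<or> t = -1 \<or> t = 0 \<or> t = 1 \<or> t \<ge> 2" by linarith
  then show ?thesis
  proof (elim disjE)
    assume "t \<le> -2"
    then show ?thesis using z mult_left_mono[of t "-2" "2 * int d + 2"] by simp
  next
    assume "t \<ge> 2"
    then show ?thesis using z mult_left_mono[of 2 t "2 * int d + 2"] by simp
  qed (use z in auto)
qed

lemma bigD_dvd_small_iff: "- bigD d < z \<Longrightarrow> z < bigD d \<Longrightarrow> bigD d dvd z \<longleftrightarrow> z = 0"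
  using bigD_dvd_cases[of d z] by (auto simp: bigD_def)

section \<open>Inversions and their orbits\<close>

definition Wpairs :: "nat \<Rightarrow> (int \<times> int) set" where
  "Wpairs d = {(x, y). x < y \<and> \<not> W_fixed d x \<and> \<not> W_fixed d y}"

definition inversions :: "nat \<Rightarrow> (int \<Rightarrow> int) \<Rightarrow> (int \<times> int) set" where
  "inversions d f = {p \<in> Wpairs d. f (snd p) < f (fst p)}"

text \<open>Pairs are identified along the action of W on them: translation by multiples of \<open>D\<close> and
  the reflection \<open>(x, y) \<mapsto> (-y, -x)\<close>.\<close>

definition pair_orbit :: "nat \<Rightarrow> int \<times> int \<Rightarrow> (int \<times> int) set" where
  "pair_orbit d p = range (\<lambda>k. (fst p + k * bigD d, snd p + k * bigD d))
                  \<union> range (\<lambda>k. (- snd p + k * bigD d, - fst p + k * bigD d))"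

definition ninv :: "nat \<Rightarrow> (int \<Rightarrow> int) \<Rightarrow> nat" where
  "ninv d f = card (pair_orbit d ` inversions d f)"

lemma mem_pair_orbit_iff:
  "(u, v) \<in> pair_orbit d (x, y) \<longleftrightarrow>
     v - u = y - x \<and> (bigD d dvd (u - x) \<or> bigD d dvd (u + y))"
proof
  assume "v - u = y - x \<and> (bigD d dvd (u - x) \<or> bigD d dvd (u + y))"
  then consider k where "v - u = y - x" "u - x = k * bigD d"
    | k where "v - u = y - x" "u + y = k * bigD d"
    by (metis dvdE mult.commute)
  then show "(u, v) \<in> pair_orbit d (x, y)"
  proof cases
    case (1 k)
    then show ?thesis
      unfolding pair_orbit_def by (intro UnI1 image_eqI[of _ _ k]) auto
  next
    case (2 k)
    then show ?thesis
      unfolding pair_orbit_def by (intro UnI2 image_eqI[of _ _ k]) auto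
  qed
qed (auto simp: pair_orbit_def)

lemma pair_orbit_self: "p \<in> pair_orbit d p"
  by (cases p) (simp add: mem_pair_orbit_iff)

lemma pair_orbit_sym: "q \<in> pair_orbit d p \<Longrightarrow> p \<in> pair_orbit d q"
proof (cases p, cases q)
  fix x y u v
  assume "p = (x, y)" "q = (u, v)" "q \<in> pair_orbit d p"
  then have h: "v - u = y - x" "bigD d dvd (u - x) \<or> bigD d dvd (u + y)" "p = (x, y)" "q = (u, v)"
    by (simp_all add: mem_pair_orbit_iff)
  moreover have "x - u = - (u - x)" "x + v = u + y"
    using h(1) by simp_all
  ultimately show "p \<in> pair_orbit d q"
    by (auto simp: mem_pair_orbit_iff dvd_diff_commute simp del: minus_diff_eq)
qed

lemma pair_orbit_trans: "q \<in> pair_orbit d p \<Longrightarrow> r \<in> pair_orbit d q \<Longrightarrow> r \<in> pair_orbit d p"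
proof (cases p, cases q, cases r)
  fix x y u v s t
  assume eqs: "p = (x, y)" "q = (u, v)" "r = (s, t)"
    and "q \<in> pair_orbit d p" "r \<in> pair_orbit d q"
  then have h: "v - u = y - x" "bigD d dvd (u - x) \<or> bigD d dvd (u + y)"
    "t - s = v - u" "bigD d dvd (s - u) \<or> bigD d dvd (s + v)"
    by (simp_all add: mem_pair_orbit_iff)
  have "s - x = (s - u) + (u - x)" "s + y = (s - u) + (u + y)"
    "s + y = (s + v) - (u - x)" "s - x = (s + v) - (u + y)"
    using h(1) by simp_all
  then have "bigD d dvd (s - x) \<or> bigD d dvd (s + y)"
    using h(2,4) by (metis dvd_add dvd_diff)
  then show "r \<in> pair_orbit d p"
    using h(1,3) eqs by (simp add: mem_pair_orbit_iff)
qed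

lemma pair_orbit_eq: "q \<in> pair_orbit d p \<Longrightarrow> pair_orbit d q = pair_orbit d p"
  using pair_orbit_trans pair_orbit_sym by blast

lemma pair_orbit_Wpairs:
  assumes "p \<in> Wpairs d" "q \<in> pair_orbit d p"
  shows "q \<in> Wpairs d"
proof (cases p, cases q)
  fix x y u v
  assume eqs: "p = (x, y)" "q = (u, v)"
  then have h: "x < y" "\<not> W_fixed d x" "\<not> W_fixed d y" "v - u = y - x"
    "bigD d dvd (u - x) \<or> bigD d dvd (u + y)"
    using assms by (auto simp: Wpairs_def mem_pair_orbit_iff)
  then have "(W_fixed d u \<longleftrightarrow> W_fixed d x) \<and> (W_fixed d v \<longleftrightarrow> W_fixed d y)
      \<or> (W_fixed d u \<longleftrightarrow> W_fixed d (- y)) \<and> (W_fixed d v \<longleftrightarrow> W_fixed d (- x))"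
    using W_fixed_cong[of d u x] W_fixed_cong[of d v y]
      W_fixed_cong[of d u "- y"] W_fixed_cong[of d v "- x"]
    by (auto simp: algebra_simps)
  with h eqs show "q \<in> Wpairs d"
    by (auto simp: Wpairs_def W_fixed_uminus)
qed

lemma pair_orbit_inversions:
  assumes f: "shift_equivariant d f" "odd_fun f"
    and p: "p \<in> inversions d f" and q: "q \<in> pair_orbit d p"
  shows "q \<in> inversions d f"
proof -
  have "p \<in> Wpairs d" using p by (simp add: inversions_def)
  with q have qP: "q \<in> Wpairs d" by (rule pair_orbit_Wpairs[rotated])
  obtain x y where xy: "p = (x, y)" by (cases p)
  with p have lt: "f y < f x" by (simp add: inversions_def)
  from q consider k where "q = (x + k * bigD d, y + k * bigD d)"
    | k where "q = (- y + k * bigD d, - x + k * bigD d)"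
    unfolding pair_orbit_def xy by auto
  then show ?thesis
  proof cases
    case 1
    then show ?thesis
      using qP lt shift_equivariant_mult[OF f(1)] by (auto simp: inversions_def)
  next
    case 2
    then show ?thesis
      using qP lt equivariant_odd_neg_shift[OF f] by (auto simp: inversions_def)
  qed
qed

lemma pair_orbit_inversions_cases:
  assumes "shift_equivariant d f" "odd_fun f"
  shows "pair_orbit d p \<subseteq> inversions d f \<or> pair_orbit d p \<inter> inversions d f = {}"
  using pair_orbit_inversions[OF assms] pair_orbit_sym pair_orbit_self by blast

lemma pair_orbit_normal_rep: "\<exists>q \<in> pair_orbit d p. 0 \<le> fst q + snd q \<and> fst q + snd q \<le> bigD d"
proof -
  obtain x y where p: "p = (x, y)" by (cases p)
  define D where "D = bigD d"
  have D: "D > 0" by (simp add: D_def)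
  define k where "k = (x + y + D) div (2 * D)"
  define c where "c = (x + y + D) mod (2 * D)"
  have c: "0 \<le> c" "c < 2 * D" using D by (auto simp: c_def)
  have e: "x + y + D = 2 * D * k + c" by (simp add: k_def c_def)
  show ?thesis
  proof (cases "c \<ge> D")
    case True
    let ?q = "(x + (- k) * D, y + (- k) * D)"
    have "?q \<in> pair_orbit d p"
      unfolding pair_orbit_def p D_def by (intro UnI1 image_eqI[of _ _ "- k"]) auto
    moreover have "0 \<le> fst ?q + snd ?q \<and> fst ?q + snd ?q \<le> D"
      using e c True by (simp add: algebra_simps)
    ultimately show ?thesis unfolding D_def by blast
  next
    case False
    let ?q = "(- y + k * D, - x + k * D)"
    have "?q \<in> pair_orbit d p"
      unfolding pair_orbit_def p D_def by (intro UnI2 image_eqI[of _ _ k]) auto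
    moreover have "0 \<le> fst ?q + snd ?q \<and> fst ?q + snd ?q \<le> D"
      using e c False by (simp add: algebra_simps)
    ultimately show ?thesis unfolding D_def by blast
  qed
qed

text \<open>Every orbit of inversions of \<open>f\<close> meets the finite strip \<open>0 \<le> x + y \<le> D\<close>, and inside it
  the inversions are confined by the bounded displacement of \<open>f\<close>.\<close>

lemma finite_inversion_orbits:
  assumes "f \<in> Wgrp d"
  shows "finite (pair_orbit d ` inversions d f)"
proof -
  obtain B where B: "\<And>x. \<bar>f x - x\<bar> \<le> B"
    using Wgrp_displacement_bounded[OF assms] by blast
  have f: "shift_equivariant d f" "odd_fun f" using assms by (auto simp: Wgrp_iff)
  let ?C = "inversions d f \<inter> {q. 0 \<le> fst q + snd q \<and> fst q + snd q \<le> bigD d}"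
  have "?C \<subseteq> {-B..bigD d + B} \<times> {-B..bigD d + B}"
  proof
    fix q assume q: "q \<in> ?C"
    obtain x y where xy: "q = (x, y)" by (cases q)
    with q have "x < y" "f y < f x" "0 \<le> x + y" "x + y \<le> bigD d"
      by (auto simp: inversions_def Wpairs_def)
    with B[of x] B[of y] xy show "q \<in> {-B..bigD d + B} \<times> {-B..bigD d + B}"
      by auto
  qed
  then have "finite ?C" by (rule finite_subset) auto
  moreover have "pair_orbit d ` inversions d f \<subseteq> pair_orbit d ` ?C"
  proof
    fix X assume "X \<in> pair_orbit d ` inversions d f"
    then obtain p where p: "p \<in> inversions d f" "X = pair_orbit d p" by auto
    obtain q where q: "q \<in> pair_orbit d p" "0 \<le> fst q + snd q \<and> fst q + snd q \<le> bigD d"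
      using pair_orbit_normal_rep by blast
    have "q \<in> inversions d f" using pair_orbit_inversions[OF f p(1) q(1)] .
    moreover have "X = pair_orbit d q" using pair_orbit_eq[OF q(1)] p by simp
    ultimately show "X \<in> pair_orbit d ` ?C" using q by auto
  qed
  ultimately show ?thesis by (meson finite_imageI finite_subset)
qed

lemma ninv_id: "ninv d id = 0"
proof -
  have "inversions d id = {}" by (auto simp: inversions_def Wpairs_def)
  then show ?thesis by (simp add: ninv_def)
qed

section \<open>Reflections\<close>

text \<open>The element of W moving \<open>a\<close> to \<open>b\<close> and \<open>-b\<close> to \<open>-a\<close> (modulo \<open>D\<close>), and fixing all
  other residues; for \<open>(a, b) = (-1, 1), (j, j + 1), (d, d + 2)\<close> it is the simple
  reflection \<open>s\<^sub>j\<close>.\<close>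

definition affine_refl :: "int \<Rightarrow> int \<Rightarrow> int \<Rightarrow> int \<Rightarrow> int" where
  "affine_refl D a b x =
    (if D dvd (x - a) \<or> D dvd (x + b) then x + (b - a)
     else if D dvd (x - b) \<or> D dvd (x + a) then x - (b - a) else x)"

locale simple_refl =
  fixes d :: nat and a b :: int
  assumes d_ge2: "d \<ge> 2"
    and ab: "(a = -1 \<and> b = 1) \<or> (1 \<le> a \<and> a \<le> int d - 1 \<and> b = a + 1) \<or> (a = int d \<and> b = int d + 2)"
begin

abbreviation "s \<equiv> affine_refl (bigD d) a b"

definition up :: "int \<Rightarrow> bool" where
  "up x \<longleftrightarrow> bigD d dvd (x - a) \<or> bigD d dvd (x + b)"

definition down :: "int \<Rightarrow> bool" where
  "down x \<longleftrightarrow> bigD d dvd (x - b) \<or> bigD d dvd (x + a)"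

lemma gap_cases: "b - a = 1 \<or> b - a = 2"
  using ab by auto

lemma not_dvd_2a: "\<not> bigD d dvd (2 * a)"
  and not_dvd_2b: "\<not> bigD d dvd (2 * b)"
  and not_dvd_gap: "\<not> bigD d dvd (b - a)"
  using ab d_ge2 bigD_dvd_cases[of d "2 * a"] bigD_dvd_cases[of d "2 * b"] bigD_dvd_cases[of d "b - a"]
  by auto

lemma not_W_fixed_a: "\<not> W_fixed d a"
  and not_W_fixed_b: "\<not> W_fixed d b"
  using ab d_ge2 bigD_dvd_cases[of d a] bigD_dvd_cases[of d b]
    bigD_dvd_cases[of d "a - (int d + 1)"] bigD_dvd_cases[of d "b - (int d + 1)"]
  by (auto simp: W_fixed_def)

lemma W_fixed_between: "b - a = 2 \<Longrightarrow> W_fixed d (a + 1)"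
  using ab by (auto simp: W_fixed_def)

lemma not_up_and_down: "\<not> (up x \<and> down x)"
proof
  assume "up x \<and> down x"
  then have "(bigD d dvd (x - a) \<or> bigD d dvd (x + b)) \<and> (bigD d dvd (x - b) \<or> bigD d dvd (x + a))"
    by (simp add: up_def down_def)
  moreover have "b - a = (x - a) - (x - b)" "2 * a = (x + a) - (x - a)"
    "2 * b = (x + b) - (x - b)" "b - a = (x + b) - (x + a)"
    by simp_all
  ultimately show False
    using not_dvd_2a not_dvd_2b not_dvd_gap by (metis dvd_diff)
qed

lemma refl_up: "up x \<Longrightarrow> s x = x + (b - a)"
  unfolding up_def affine_refl_def by (rule if_P)

lemma refl_down: "down x \<Longrightarrow> s x = x - (b - a)"
  using not_up_and_down[of x] unfolding up_def down_def affine_refl_def by argo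

lemma refl_other: "\<not> up x \<Longrightarrow> \<not> down x \<Longrightarrow> s x = x"
  unfolding up_def down_def affine_refl_def by simp

lemma up_shift: "up x \<Longrightarrow> down (x + (b - a))"
proof -
  have "x + (b - a) - b = x - a" "x + (b - a) + a = x + b" by simp_all
  then show "up x \<Longrightarrow> down (x + (b - a))" unfolding up_def down_def by argo
qed

lemma down_shift: "down x \<Longrightarrow> up (x - (b - a))"
proof -
  have "x - (b - a) - a = x - b" "x - (b - a) + b = x + a" by simp_all
  then show "down x \<Longrightarrow> up (x - (b - a))" unfolding up_def down_def by argo
qed

lemma refl_refl [simp]: "s (s x) = x"
proof -
  consider "up x" | "down x" | "\<not> up x" "\<not> down x" by blast
  then show ?thesis
  proof cases
    case 1
    then show ?thesis using refl_up up_shift refl_down by simp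
  next
    case 2
    then show ?thesis using refl_down down_shift refl_up by simp
  qed (simp add: refl_other)
qed

lemma refl_bij: "bij s"
  by (metis bij_betw_imageI inj_on_inverseI refl_refl surj_def)

lemma inv_refl: "inv s = s"
  using inv_unique_comp[of s s] by (simp add: fun_eq_iff)

lemma refl_shift_equivariant: "shift_equivariant d s"
  unfolding shift_equivariant_def
proof
  fix x
  have shift: "x + bigD d - c = (x - c) + bigD d" "x + bigD d + c = (x + c) + bigD d" for c
    by simp_all
  show "s (x + bigD d) = s x + bigD d"
    unfolding affine_refl_def shift by simp
qed

lemma refl_odd: "odd_fun s"
proof -
  have "- x - c = - (x + c)" "- x + c = - (x - c)" for x c :: int
    by simp_all
  then have "up (- x) = down x" "down (- x) = up x" for x
    unfolding up_def down_def by (metis dvd_minus_iff)+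
  then show ?thesis
    unfolding odd_fun_def
    by (metis refl_up refl_down refl_other minus_diff_eq minus_minus uminus_add_conv_diff diff_minus_eq_add add.commute)
qed

lemma refl_in_Wgrp: "s \<in> Wgrp d"
  using refl_bij refl_shift_equivariant refl_odd by (simp add: Wgrp_iff)

lemma refl_W_fixed: "W_fixed d x \<Longrightarrow> s x = x"
proof (rule refl_other)
  assume x: "W_fixed d x"
  have "x - (- b) = x + b" "x - (- a) = x + a" by simp_all
  then show "\<not> up x" "\<not> down x"
    unfolding up_def down_def
    using W_fixed_cong[of d x] x not_W_fixed_a not_W_fixed_b W_fixed_uminus by metis+
qed

lemma refl_not_W_fixed: "\<not> W_fixed d x \<Longrightarrow> \<not> W_fixed d (s x)"
  by (metis refl_refl refl_W_fixed)

lemma refl_bounds: "x - (b - a) \<le> s x" "s x \<le> x + (b - a)"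
  using gap_cases unfolding affine_refl_def by auto

lemma up_W_fixed: "b - a = 2 \<Longrightarrow> up x \<Longrightarrow> W_fixed d (x + 1)"
proof -
  assume gap: "b - a = 2" and "up x"
  then have "bigD d dvd ((x + 1) - (a + 1)) \<or> bigD d dvd ((x + 1) - (- (a + 1)))"
    unfolding up_def by (auto simp: algebra_simps)
  then show ?thesis
    using W_fixed_between[OF gap] W_fixed_cong W_fixed_uminus by metis
qed

lemma down_W_fixed: "b - a = 2 \<Longrightarrow> down y \<Longrightarrow> W_fixed d (y - 1)"
  using up_W_fixed[of "y - 2"] down_shift[of y] by simp

text \<open>Here \<open>y - x\<close> is congruent modulo \<open>D\<close> to \<open>b - a\<close>, \<open>-2 a\<close> or \<open>2 b\<close>, and the only one of these
  residues meeting \<open>[1, 2 (b - a)]\<close> is \<open>b - a\<close> itself.\<close>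

lemma up_down_far:
  assumes "up x" "down y" "x < y" "y - x \<le> 2 * (b - a)" "y - x \<noteq> b - a"
  shows False
proof -
  have "\<not> bigD d dvd (y - x - (b - a))" "\<not> bigD d dvd (y - x + 2 * a)" "\<not> bigD d dvd (y - x - 2 * b)"
    using assms(3-5) ab d_ge2 bigD_dvd_cases[of d "y - x - (b - a)"]
      bigD_dvd_cases[of d "y - x + 2 * a"] bigD_dvd_cases[of d "y - x - 2 * b"]
    by auto
  moreover have "y - x - (b - a) = (y - b) - (x - a)" "y - x + 2 * a = (y + a) - (x - a)"
    "y - x - 2 * b = (y - b) - (x + b)" "y - x - (b - a) = (y + a) - (x + b)"
    by simp_all
  ultimately show False
    using assms(1,2) unfolding up_def down_def by (metis dvd_diff)
qed

lemma refl_strict_mono: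
  assumes xy: "x < y" and x: "\<not> W_fixed d x" and y: "\<not> W_fixed d y" and sxy: "s x \<noteq> y"
  shows "s x < s y"
proof (rule ccontr)
  assume "\<not> s x < s y"
  then have le: "s y \<le> s x" by simp
  have "s y \<noteq> x" using sxy refl_refl by metis
  consider "down x" | "\<not> up x" "\<not> down x" | "up x" by blast
  then show False
  proof cases
    case 1
    then show False using le refl_down refl_bounds(1)[of y] xy by fastforce
  next
    case 2
    then have sx: "s x = x" by (rule refl_other)
    then have "down y" using le xy refl_up[of y] refl_other[of y] gap_cases by fastforce
    moreover have "y = x + 1" "b - a = 2"
      using le sx refl_down[of y] gap_cases xy \<open>s y \<noteq> x\<close> \<open>down y\<close> by auto
    ultimately show False using down_W_fixed x by force
  next
    case 3
    then have sx: "s x = x + (b - a)" by (rule refl_up)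
    consider "up y" | "\<not> up y" "\<not> down y" | "down y" by blast
    then show False
    proof cases
      case 1
      then show False using le sx refl_up xy by fastforce
    next
      case 2
      then have "y = x + 1" "b - a = 2"
        using le sx refl_other[of y] gap_cases xy sxy by auto
      then show False using up_W_fixed[OF _ 3] y by force
    next
      case 4: 3
      then show False
        using up_down_far[OF 3 4 xy] le sx refl_down[of y] sxy by fastforce
    qed
  qed
qed

lemma ab_Wpairs: "(a, b) \<in> Wpairs d"
  using not_W_fixed_a not_W_fixed_b ab by (auto simp: Wpairs_def)

lemma mem_refl_orbit_iff: "(x, y) \<in> pair_orbit d (a, b) \<longleftrightarrow> x < y \<and> s x = y"
proof
  assume "(x, y) \<in> pair_orbit d (a, b)"
  then have "up x" "y = x + (b - a)"
    by (auto simp: mem_pair_orbit_iff up_def)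
  then show "x < y \<and> s x = y"
    using refl_up gap_cases by auto
next
  assume h: "x < y \<and> s x = y"
  have "up x"
  proof (rule ccontr)
    assume "\<not> up x"
    then have "s x \<le> x"
      using refl_down refl_other gap_cases by (cases "down x") auto
    with h show False by simp
  qed
  with h have "y = x + (b - a)" using refl_up by simp
  with \<open>up x\<close> show "(x, y) \<in> pair_orbit d (a, b)"
    by (auto simp: mem_pair_orbit_iff up_def)
qed

lemma refl_orbit_Wpairs: "pair_orbit d (a, b) \<subseteq> Wpairs d"
  using pair_orbit_Wpairs[OF ab_Wpairs] by blast

definition map_refl :: "int \<times> int \<Rightarrow> int \<times> int" where
  "map_refl p = (s (fst p), s (snd p))"

lemma map_refl_map_refl [simp]: "map_refl (map_refl p) = p"
  by (simp add: map_refl_def)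

lemma inj_map_refl: "inj map_refl"
  by (metis injI map_refl_map_refl)

lemma map_refl_pair_orbit: "map_refl ` pair_orbit d p = pair_orbit d (map_refl p)"
proof -
  have "map_refl (fst p + k * bigD d, snd p + k * bigD d)
      = (s (fst p) + k * bigD d, s (snd p) + k * bigD d)" for k
    using shift_equivariant_mult[OF refl_shift_equivariant] by (simp add: map_refl_def)
  moreover have "map_refl (- snd p + k * bigD d, - fst p + k * bigD d)
      = (- s (snd p) + k * bigD d, - s (fst p) + k * bigD d)" for k
    using equivariant_odd_neg_shift[OF refl_shift_equivariant refl_odd] by (simp add: map_refl_def)
  ultimately show ?thesis
    unfolding pair_orbit_def image_Un image_image by (simp add: map_refl_def)
qed

lemma map_refl_Wpairs:
  assumes "p \<in> Wpairs d" "p \<notin> pair_orbit d (a, b)"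
  shows "map_refl p \<in> Wpairs d - pair_orbit d (a, b)"
proof -
  obtain x y where p: "p = (x, y)" by (cases p)
  with assms have h: "x < y" "\<not> W_fixed d x" "\<not> W_fixed d y" "s x \<noteq> y"
    by (auto simp: Wpairs_def mem_refl_orbit_iff)
  then have "s x < s y" "\<not> W_fixed d (s x)" "\<not> W_fixed d (s y)"
    using refl_strict_mono refl_not_W_fixed by auto
  moreover have "s (s x) \<noteq> s y" using h(4) by (metis refl_refl)
  ultimately show ?thesis
    by (simp add: p map_refl_def Wpairs_def mem_refl_orbit_iff)
qed

lemma inversions_comp_refl:
  assumes "inj f"
  shows "inversions d (f \<circ> s) =
    map_refl ` (inversions d f - pair_orbit d (a, b)) \<union> (pair_orbit d (a, b) - inversions d f)"
    (is "?L = ?R")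
proof (intro equalityI subsetI)
  fix p assume p: "p \<in> ?L"
  obtain x y where xy: "p = (x, y)" by (cases p)
  with p have pP: "p \<in> Wpairs d" and lt: "f (s y) < f (s x)"
    by (auto simp: inversions_def)
  show "p \<in> ?R"
  proof (cases "p \<in> pair_orbit d (a, b)")
    case True
    then have "s x = y" "s y = x" using xy by (auto simp: mem_refl_orbit_iff)
    with True lt xy show ?thesis by (auto simp: inversions_def)
  next
    case False
    then have "map_refl p \<in> inversions d f - pair_orbit d (a, b)"
      using map_refl_Wpairs[OF pP] lt xy by (auto simp: inversions_def map_refl_def)
    then show ?thesis using map_refl_map_refl by (metis UnI1 image_eqI)
  qed
next
  fix p assume "p \<in> ?R"
  then show "p \<in> ?L"
  proof
    assume "p \<in> map_refl ` (inversions d f - pair_orbit d (a, b))"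
    then obtain q where q: "q \<in> inversions d f" "q \<notin> pair_orbit d (a, b)" "p = map_refl q"
      by auto
    then have "map_refl q \<in> Wpairs d"
      using map_refl_Wpairs by (auto simp: inversions_def)
    with q show ?thesis by (simp add: inversions_def map_refl_def)
  next
    assume p: "p \<in> pair_orbit d (a, b) - inversions d f"
    obtain x y where xy: "p = (x, y)" by (cases p)
    with p have "x < y" "s x = y" "s y = x" "p \<in> Wpairs d"
      using refl_orbit_Wpairs by (auto simp: mem_refl_orbit_iff)
    moreover have "f x \<noteq> f y"
      using assms \<open>x < y\<close> by (metis inj_eq less_irrefl)
    ultimately show ?thesis
      using p xy by (auto simp: inversions_def)
  qed
qed

lemma pair_orbit_map_refl_image: "pair_orbit d ` (map_refl ` X) = (\<lambda>Q. map_refl ` Q) ` pair_orbit d ` X"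
  by (simp add: image_image map_refl_pair_orbit)

lemma ninv_comp_refl:
  assumes f: "f \<in> Wgrp d"
  shows "f a < f b \<Longrightarrow> ninv d (f \<circ> s) = ninv d f + 1"
    and "f b < f a \<Longrightarrow> ninv d (f \<circ> s) + 1 = ninv d f"
proof -
  let ?S = "pair_orbit d (a, b)" and ?I = "inversions d f"
  let ?O = "pair_orbit d ` ?I" and ?M = "\<lambda>Q. map_refl ` Q"
  have fW: "inj f" "shift_equivariant d f" "odd_fun f"
    using f by (auto simp: Wgrp_iff bij_is_inj)
  have fin: "finite ?O" using finite_inversion_orbits[OF f] .
  have inj: "inj_on ?M X" for X
    by (meson inj_image_eq_iff inj_map_refl inj_onI)
  have ab_inv: "(a, b) \<in> ?I \<longleftrightarrow> f b < f a"
    using ab_Wpairs by (simp add: inversions_def)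
  have orbits_rest: "pair_orbit d ` (?I - ?S) = ?O - {?S}"
  proof (intro equalityI subsetI)
    fix X assume "X \<in> pair_orbit d ` (?I - ?S)"
    then obtain p where "p \<in> ?I" "p \<notin> ?S" "X = pair_orbit d p" by auto
    then show "X \<in> ?O - {?S}" using pair_orbit_self[of p d] by auto
  next
    fix X assume "X \<in> ?O - {?S}"
    then obtain p where "p \<in> ?I" "X = pair_orbit d p" "pair_orbit d p \<noteq> ?S" by auto
    then show "X \<in> pair_orbit d ` (?I - ?S)" using pair_orbit_eq[of p d "(a, b)"] by auto
  qed
  have S_new: "?S \<notin> ?M ` (?O - {?S})"
  proof
    assume "?S \<in> ?M ` (?O - {?S})"
    then obtain p where p: "p \<in> ?I" "p \<notin> ?S" "pair_orbit d (map_refl p) = ?S"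
      unfolding orbits_rest[symmetric] image_image map_refl_pair_orbit by auto
    then have "map_refl p \<in> ?S" using pair_orbit_self[of "map_refl p" d] by simp
    moreover have "p \<in> Wpairs d" using p(1) by (simp add: inversions_def)
    ultimately show False using map_refl_Wpairs p(2) by blast
  qed
  have orbits: "pair_orbit d ` inversions d (f \<circ> s) = ?M ` (?O - {?S}) \<union> pair_orbit d ` (?S - ?I)"
    unfolding inversions_comp_refl[OF fW(1)] image_Un pair_orbit_map_refl_image orbits_rest ..
  show "ninv d (f \<circ> s) = ninv d f + 1" if asc: "f a < f b"
  proof -
    have "?S \<inter> ?I = {}"
      using pair_orbit_inversions_cases[OF fW(2,3), of "(a, b)"] pair_orbit_self[of "(a, b)" d] ab_inv asc
      by auto
    then have "?S \<notin> ?O" "?S - ?I = ?S"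
      using pair_orbit_eq pair_orbit_self by blast+
    moreover have "pair_orbit d ` ?S = {?S}"
      using pair_orbit_eq pair_orbit_self[of "(a, b)" d] by blast
    ultimately have "pair_orbit d ` inversions d (f \<circ> s) = insert ?S (?M ` ?O)"
      using orbits by auto
    with S_new \<open>?S \<notin> ?O\<close> fin show ?thesis
      by (simp add: ninv_def card_image[OF inj])
  qed
  show "ninv d (f \<circ> s) + 1 = ninv d f" if desc: "f b < f a"
  proof -
    have "?S \<subseteq> ?I"
      using pair_orbit_inversions_cases[OF fW(2,3), of "(a, b)"] pair_orbit_self[of "(a, b)" d] ab_inv desc
      by auto
    then have "?S \<in> ?O" "?S - ?I = {}"
      using pair_orbit_self[of "(a, b)" d] by auto
    with orbits have "ninv d (f \<circ> s) = card (?O - {?S})"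
      by (simp add: ninv_def card_image[OF inj])
    moreover have "card ?O > 0"
      using \<open>?S \<in> ?O\<close> fin card_gt_0_iff by blast
    ultimately show ?thesis
      using \<open>?S \<in> ?O\<close> fin by (simp add: ninv_def card_Diff_singleton)
  qed
qed

end

section \<open>Simple reflections and the Coxeter length\<close>

definition sref_lo :: "nat \<Rightarrow> int" where
  "sref_lo j = (if j = 0 then -1 else int j)"

definition sref_hi :: "nat \<Rightarrow> nat \<Rightarrow> int" where
  "sref_hi d j = (if j = 0 then 1 else if j = d then int d + 2 else int j + 1)"

lemma sref_lo_less_hi: "sref_lo j < sref_hi d j"
  by (simp add: sref_lo_def sref_hi_def)

lemma simple_refl_sref: "d \<ge> 2 \<Longrightarrow> j \<le> d \<Longrightarrow> simple_refl d (sref_lo j) (sref_hi d j)"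
  by unfold_locales (auto simp: sref_lo_def sref_hi_def)

lemma sref_eq_affine_refl:
  assumes d: "d \<ge> 2" and j: "j \<le> d"
  shows "sref d j = affine_refl (bigD d) (sref_lo j) (sref_hi d j)"
proof -
  interpret simple_refl d "sref_lo j" "sref_hi d j"
    using simple_refl_sref[OF d j] .
  have agree: "sref d j k = s k" if k: "1 \<le> k" "k \<le> int d" for k
  proof -
    have small: "bigD d dvd z \<longleftrightarrow> z = 0" if "- int d - 2 < z" "z < 2 * int d + 2" for z
      using bigD_dvd_small_iff[of d z] that by (simp add: bigD_def)
    have edge: "bigD d dvd (k + (int d + 2)) \<longleftrightarrow> k = int d"
    proof -
      have "k + (int d + 2) = (k - int d) + bigD d" by (simp add: bigD_def)
      then have "bigD d dvd (k + (int d + 2)) \<longleftrightarrow> bigD d dvd (k - int d)"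
        by (metis dvd_add_triv_right_iff)
      then show ?thesis using small[of "k - int d"] k by simp
    qed
    consider "j = 0" | "j = d" | "j \<noteq> 0" "j \<noteq> d" by blast
    then show ?thesis
    proof cases
      case 1
      with k d show ?thesis
        by (simp add: sref_def Wext_base affine_refl_def sref_lo_def sref_hi_def small)
    next
      case 2
      with k d show ?thesis
        by (simp add: sref_def Wext_base affine_refl_def sref_lo_def sref_hi_def small edge)
    next
      case 3
      with k j show ?thesis
        by (simp add: sref_def Wext_base affine_refl_def sref_lo_def sref_hi_def small)
    qed
  qed
  show ?thesis
    unfolding sref_def
    by (rule equivariant_odd_eqI[OF Wext_shift_equivariant Wext_odd refl_shift_equivariant refl_odd])
      (use agree in \<open>simp add: sref_def\<close>)
qed

lemma sref_in_Wgrp: "d \<ge> 2 \<Longrightarrow> j \<le> d \<Longrightarrow> sref d j \<in> Wgrp d"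
  using sref_eq_affine_refl simple_refl.refl_in_Wgrp simple_refl_sref by metis

lemma sref_sref: "d \<ge> 2 \<Longrightarrow> j \<le> d \<Longrightarrow> sref d j (sref d j x) = x"
  using sref_eq_affine_refl simple_refl.refl_refl simple_refl_sref by metis

lemma wordprod_Nil [simp]: "wordprod d [] = id"
  by (simp add: wordprod_def)

lemma wordprod_Cons [simp]: "wordprod d (j # ws) = sref d j \<circ> wordprod d ws"
  by (simp add: wordprod_def)

lemma wordprod_append: "wordprod d (ws @ vs) = wordprod d ws \<circ> wordprod d vs"
  by (induction ws) (auto simp: comp_assoc)

lemma wordprod_in_Wgrp: "d \<ge> 2 \<Longrightarrow> set ws \<subseteq> {0..d} \<Longrightarrow> wordprod d ws \<in> Wgrp d"
  by (induction ws) (auto intro: Wgrp_comp sref_in_Wgrp Wgrp_id)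

lemma wordprod_rev_cancel:
  assumes d: "d \<ge> 2"
  shows "set ws \<subseteq> {0..d} \<Longrightarrow> wordprod d (rev ws) (wordprod d ws x) = x"
proof (induction ws arbitrary: x)
  case (Cons j ws)
  then show ?case by (simp add: wordprod_append sref_sref[OF d])
qed simp

lemma inv_wordprod:
  assumes d: "d \<ge> 2" and ws: "set ws \<subseteq> {0..d}"
  shows "inv (wordprod d ws) = wordprod d (rev ws)"
  using wordprod_rev_cancel[OF d ws] wordprod_rev_cancel[OF d, of "rev ws"] ws
  by (intro inv_unique_comp) (auto simp: fun_eq_iff)

definition inv_count :: "nat \<Rightarrow> (int \<Rightarrow> int) \<Rightarrow> nat" where
  "inv_count d g = ninv d (inv g)"

lemma inv_count_id: "inv_count d id = 0"
  by (simp add: inv_count_def inv_id ninv_id)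

lemma inv_count_sref:
  assumes d: "d \<ge> 2" and j: "j \<le> d" and g: "g \<in> Wgrp d"
  shows "inv g (sref_lo j) < inv g (sref_hi d j) \<Longrightarrow> inv_count d (sref d j \<circ> g) = inv_count d g + 1"
    and "inv g (sref_hi d j) < inv g (sref_lo j) \<Longrightarrow> inv_count d (sref d j \<circ> g) + 1 = inv_count d g"
proof -
  interpret simple_refl d "sref_lo j" "sref_hi d j"
    using simple_refl_sref[OF d j] .
  have "bij g" using g by (simp add: Wgrp_iff)
  then have "inv (s \<circ> g) = inv g \<circ> s"
    using o_inv_distrib[OF refl_bij] inv_refl by simp
  then have "inv_count d (sref d j \<circ> g) = ninv d (inv g \<circ> s)"
    by (simp add: inv_count_def sref_eq_affine_refl[OF d j])
  then show "inv g (sref_lo j) < inv g (sref_hi d j) \<Longrightarrow> inv_count d (sref d j \<circ> g) = inv_count d g + 1"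
    and "inv g (sref_hi d j) < inv g (sref_lo j) \<Longrightarrow> inv_count d (sref d j \<circ> g) + 1 = inv_count d g"
    using ninv_comp_refl[OF Wgrp_inv[OF g]] by (simp_all add: inv_count_def)
qed

lemma inv_sref_lo_hi_neq:
  assumes "g \<in> Wgrp d"
  shows "inv g (sref_lo j) \<noteq> inv g (sref_hi d j)"
proof -
  have "inj (inv g)" using Wgrp_inv[OF assms] by (simp add: Wgrp_iff bij_is_inj)
  moreover have "sref_lo j \<noteq> sref_hi d j" using sref_lo_less_hi[of j d] by simp
  ultimately show ?thesis by (simp add: inj_eq)
qed

lemma inv_count_sref_le:
  assumes "d \<ge> 2" "j \<le> d" "g \<in> Wgrp d"
  shows "inv_count d (sref d j \<circ> g) \<le> inv_count d g + 1"
proof (cases "inv g (sref_lo j) < inv g (sref_hi d j)")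
  case True
  then show ?thesis using inv_count_sref(1)[OF assms] by simp
next
  case False
  then have "inv g (sref_hi d j) < inv g (sref_lo j)"
    using inv_sref_lo_hi_neq[OF assms(3), of j] by linarith
  then show ?thesis using inv_count_sref(2)[OF assms] by simp
qed

lemma inv_count_wordprod_le:
  assumes d: "d \<ge> 2"
  shows "set ws \<subseteq> {0..d} \<Longrightarrow> inv_count d (wordprod d ws) \<le> length ws"
proof (induction ws)
  case Nil
  then show ?case using inv_count_id[of d] by (simp add: id_def)
next
  case (Cons j ws)
  then have "j \<le> d" "set ws \<subseteq> {0..d}" by auto
  then have "inv_count d (sref d j \<circ> wordprod d ws) \<le> inv_count d (wordprod d ws) + 1"
    by (intro inv_count_sref_le[OF d] wordprod_in_Wgrp[OF d])
  moreover have "inv_count d (wordprod d ws) \<le> length ws"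
    using Cons.IH \<open>set ws \<subseteq> {0..d}\<close> by simp
  ultimately show ?case
    by (simp only: wordprod_Cons length_Cons)
qed

text \<open>The ascent conditions force \<open>f\<close> to be increasing on \<open>1..d\<close> with \<open>0 < f 1\<close> and \<open>f d \<le> d\<close>.\<close>

lemma no_descent_eq_id:
  assumes d: "d \<ge> 2" and f: "f \<in> Wgrp d" and asc: "\<And>j. j \<le> d \<Longrightarrow> f (sref_lo j) < f (sref_hi d j)"
  shows "f = id"
proof -
  have eo: "shift_equivariant d f" "odd_fun f" using f by (auto simp: Wgrp_iff)
  have f1: "f 1 > 0"
    using asc[of 0] eo(2) by (simp add: sref_lo_def sref_hi_def odd_fun_def)
  have step: "f (int i) < f (int i + 1)" if "1 \<le> i" "i < d" for i
    using asc[of i] that by (simp add: sref_lo_def sref_hi_def)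
  have fd: "f (int d) \<le> int d"
    using asc[of d] d equivariant_odd_mirror[OF eo, of "int d"]
    by (simp add: sref_lo_def sref_hi_def bigD_def algebra_simps)
  have lower: "int i \<le> f (int i)" if "1 \<le> i" "i \<le> d" for i
    using that
  proof (induction i)
    case (Suc i)
    show ?case
    proof (cases "i = 0")
      case False
      then have "int i \<le> f (int i)" "f (int i) < f (int i + 1)"
        using Suc step[of i] by auto
      then show ?thesis by (simp add: add.commute)
    qed (use f1 in simp)
  qed simp
  have upper: "f (int (d - m)) \<le> int (d - m)" if "m < d" for m
    using that
  proof (induction m)
    case (Suc m)
    then have "f (int (d - Suc m)) < f (int (d - Suc m) + 1)" "int (d - Suc m) + 1 = int (d - m)"
      using step[of "d - Suc m"] by auto
    with Suc show ?case by simp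
  qed (use fd in simp)
  have "f k = id k" if "1 \<le> k" "k \<le> int d" for k
    using lower[of "nat k"] upper[of "d - nat k"] that by simp
  then show ?thesis
    using equivariant_odd_eqI[OF eo, of id] by (simp add: shift_equivariant_def odd_fun_def)
qed

lemma wordprod_inv_count:
  assumes d: "d \<ge> 2"
  shows "g \<in> Wgrp d \<Longrightarrow> \<exists>ws. set ws \<subseteq> {0..d} \<and> length ws = inv_count d g \<and> wordprod d ws = g"
proof (induction "inv_count d g" arbitrary: g rule: less_induct)
  case less
  show ?case
  proof (cases "inv g = id")
    case True
    then have "g = id" using less.prems by (metis Wgrp_iff inv_inv_eq inv_id)
    then show ?thesis by (intro exI[of _ "[]"]) (simp add: inv_count_id)
  next
    case False
    then obtain j where j: "j \<le> d" "\<not> inv g (sref_lo j) < inv g (sref_hi d j)"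
      using no_descent_eq_id[OF d Wgrp_inv[OF less.prems]] by blast
    then have desc: "inv_count d (sref d j \<circ> g) + 1 = inv_count d g"
      using inv_count_sref(2)[OF d j(1) less.prems] inv_sref_lo_hi_neq[OF less.prems, of j] by simp
    have "sref d j \<circ> g \<in> Wgrp d"
      using Wgrp_comp sref_in_Wgrp[OF d j(1)] less.prems by blast
    then obtain ws where ws: "set ws \<subseteq> {0..d}" "length ws = inv_count d (sref d j \<circ> g)"
      "wordprod d ws = sref d j \<circ> g"
      using less.hyps[OF _ \<open>sref d j \<circ> g \<in> Wgrp d\<close>] desc by auto
    have "sref d j \<circ> (sref d j \<circ> g) = g"
      using sref_sref[OF d j(1)] by (simp add: fun_eq_iff)
    with ws j desc show ?thesis by (intro exI[of _ "j # ws"]) auto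
  qed
qed

lemma coxlen_eq_inv_count:
  assumes d: "d \<ge> 2" and g: "g \<in> Wgrp d"
  shows "coxlen d g = inv_count d g"
  unfolding coxlen_def
proof (rule Least_equality)
  show "\<exists>ws. length ws = inv_count d g \<and> set ws \<subseteq> {0..d} \<and> wordprod d ws = g"
    using wordprod_inv_count[OF d g] by blast
qed (use inv_count_wordprod_le[OF d] in blast)

lemma coxlen_sref:
  assumes "d \<ge> 2" "j \<le> d"
  shows "coxlen d (sref d j) = 1"
proof -
  have "inv_count d (sref d j \<circ> id) = inv_count d id + 1"
    using inv_count_sref(1)[OF assms Wgrp_id] sref_lo_less_hi by (simp add: inv_id)
  then show ?thesis
    using coxlen_eq_inv_count[OF assms(1) sref_in_Wgrp[OF assms]] by (simp add: inv_count_id)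
qed

lemma coxlen_sref_comp_iff:
  assumes d: "d \<ge> 2" and j: "j \<le> d" and g: "g \<in> Wgrp d"
  shows "coxlen d (sref d j \<circ> g) = coxlen d g + 1 \<longleftrightarrow> inv g (sref_lo j) < inv g (sref_hi d j)"
proof -
  have "coxlen d (sref d j \<circ> g) = inv_count d (sref d j \<circ> g)" "coxlen d g = inv_count d g"
    using coxlen_eq_inv_count[OF d] Wgrp_comp[OF sref_in_Wgrp[OF d j] g] g by auto
  moreover have "inv g (sref_hi d j) < inv g (sref_lo j)"
    if "\<not> inv g (sref_lo j) < inv g (sref_hi d j)"
    using that inv_sref_lo_hi_neq[OF g, of j] by linarith
  ultimately show ?thesis
    using inv_count_sref[OF d j g] by fastforce
qed

section \<open>The blocks \<open>R\<^sub>i\<close>\<close>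

lemma lam0_0 [simp]: "lam0 lam 0 = lam 0"
  by (simp add: lam0_def)

lemma lam0_mono: "i \<le> k \<Longrightarrow> lam0 lam i \<le> lam0 lam k"
  unfolding lam0_def by (rule sum_mono2) auto

lemma lam0_last: "(\<Sum>i\<le>r + 1. lam i) = d \<Longrightarrow> lam0 lam r + lam (r + 1) = d"
  by (simp add: lam0_def)

lemma order_pres_on_atLeastAtMost:
  assumes step: "\<And>x. lo \<le> x \<Longrightarrow> x < hi \<Longrightarrow> f x < f (x + 1)"
  shows "order_pres_on f {lo..hi}"
proof -
  have "f x < f (x + int n + 1)" if "lo \<le> x" "x + int n + 1 \<le> hi" for x n
    using that
  proof (induction n)
    case (Suc n)
    then have "f x < f (x + int n + 1)" by simp
    also have "\<dots> < f (x + int n + 1 + 1)"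
      by (rule step) (use Suc.prems in auto)
    finally show ?case by (simp add: ac_simps)
  qed (use step in simp)
  moreover have "y = x + int (nat (y - x - 1)) + 1" if "x < y" for x y :: int
    using that by simp
  ultimately show ?thesis
    unfolding order_pres_on_def by (metis atLeastAtMost_iff)
qed

text \<open>At the ends \<open>j = 0\<close> and \<open>j = d\<close> this uses \<open>f 0 = 0\<close> and \<open>f (d + 1) = d + 1\<close>.\<close>

lemma ascent_imp_step:
  assumes d: "d \<ge> 2" and f: "f \<in> Wgrp d" and j: "j \<le> d"
    and asc: "f (sref_lo j) < f (sref_hi d j)"
  shows "f (int j) < f (int j + 1)"
proof -
  have eo: "shift_equivariant d f" "odd_fun f" using f by (auto simp: Wgrp_iff)
  consider "j = 0" | "j = d" | "j \<noteq> 0" "j \<noteq> d" by blast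
  then show ?thesis
  proof cases
    case 1
    then show ?thesis
      using asc odd_fun_zero[OF eo(2)] eo(2) by (simp add: sref_lo_def sref_hi_def odd_fun_def)
  next
    case 2
    then show ?thesis
      using asc d equivariant_odd_mirror[OF eo, of "int d"] equivariant_odd_mid[OF eo]
      by (simp add: sref_lo_def sref_hi_def bigD_def algebra_simps)
  next
    case 3
    then show ?thesis using asc by (simp add: sref_lo_def sref_hi_def)
  qed
qed

lemma order_pres_on_Rbase:
  assumes S: "(\<Sum>i\<le>r + 1. lam i) = d" and f: "f \<in> Wgrp d"
    and step: "\<And>j. j \<le> d \<Longrightarrow> \<forall>i \<le> r. j \<noteq> lam0 lam i \<Longrightarrow> f (int j) < f (int j + 1)"
    and k: "k \<le> r + 1"
  shows "order_pres_on f (Rbase r d lam k)"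
proof -
  have eo: "shift_equivariant d f" "odd_fun f" using f by (auto simp: Wgrp_iff)
  have last: "lam0 lam r + lam (r + 1) = d" using lam0_last[OF S] .
  have int_step: "f x < f (x + 1)"
    if "0 \<le> x" "x \<le> int d" "\<And>i. i \<le> r \<Longrightarrow> x \<noteq> int (lam0 lam i)" for x
  proof -
    have "nat x \<le> d" "\<forall>i \<le> r. nat x \<noteq> lam0 lam i"
      using that by (auto simp: nat_eq_iff)
    then show ?thesis using step[of "nat x"] that(1) by simp
  qed
  have neg_step: "f x < f (x + 1)" if "f (- (x + 1)) < f (- x)" for x
    using that eo(2) unfolding odd_fun_def by (metis neg_less_iff_less)
  have mirror_step: "f x < f (x + 1)" if "f (bigD d - x - 1) < f (bigD d - x - 1 + 1)" for x
    using that equivariant_odd_mirror[OF eo, of x] equivariant_odd_mirror[OF eo, of "x + 1"]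
    by (simp add: algebra_simps)
  consider "k = 0" | "1 \<le> k" "k \<le> r" | "k = r + 1" using k by linarith
  then show ?thesis
  proof cases
    case 1
    have ge0: "lam 0 \<le> lam0 lam i" for i using lam0_mono[of 0 i lam] by simp
    have low: "f x < f (x + 1)" if "0 \<le> x" "x < int (lam 0)" for x
    proof (rule int_step)
      show "0 \<le> x" "x \<le> int d" using that last ge0[of r] by auto
      show "x \<noteq> int (lam0 lam i)" for i using that ge0[of i] by auto
    qed
    show ?thesis
      unfolding 1 Rbase_def
    proof (simp, rule order_pres_on_atLeastAtMost)
      fix x assume x: "- int (lam 0) \<le> x" "x < int (lam 0)"
      show "f x < f (x + 1)"
      proof (cases "0 \<le> x")
        case True
        with x show ?thesis by (intro low) auto
      next
        case False
        with x have "f (- x - 1) < f (- x - 1 + 1)" by (intro low) auto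
        moreover have "- (x + 1) = - x - 1" "- x - 1 + 1 = - x" by simp_all
        ultimately show ?thesis using neg_step[of x] by metis
      qed
    qed
  next
    case 2
    have "f x < f (x + 1)" if "int (lam0 lam (k - 1)) + 1 \<le> x" "x < int (lam0 lam k)" for x
    proof (rule int_step)
      show "0 \<le> x" "x \<le> int d"
        using that lam0_mono[of k r lam] 2 last by auto
      show "x \<noteq> int (lam0 lam i)" for i
      proof (cases "i < k")
        case True
        then have "lam0 lam i \<le> lam0 lam (k - 1)" by (intro lam0_mono) simp
        with that(1) show ?thesis by simp
      next
        case False
        then have "lam0 lam k \<le> lam0 lam i" by (intro lam0_mono) simp
        with that(2) show ?thesis by simp
      qed
    qed
    then show ?thesis
      using 2 unfolding Rbase_def by (simp add: order_pres_on_atLeastAtMost)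
  next
    case 3
    have high: "f x < f (x + 1)" if "int d + 1 - int (lam (r + 1)) \<le> x" "x \<le> int d" for x
    proof (rule int_step)
      show "0 \<le> x" "x \<le> int d" using that last by auto
      show "x \<noteq> int (lam0 lam i)" if "i \<le> r" for i
        using that lam0_mono[of i r lam] last \<open>int d + 1 - int (lam (r + 1)) \<le> x\<close> by auto
    qed
    have Rb: "Rbase r d lam k = {int d + 1 - int (lam (r + 1)) .. int d + 1 + int (lam (r + 1))}"
      using 3 by (simp add: Rbase_def)
    show ?thesis
      unfolding Rb
    proof (rule order_pres_on_atLeastAtMost)
      fix x assume x: "int d + 1 - int (lam (r + 1)) \<le> x" "x < int d + 1 + int (lam (r + 1))"
      show "f x < f (x + 1)"
      proof (cases "x \<le> int d")
        case True
        with x show ?thesis by (intro high)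
      next
        case False
        with x have "f (bigD d - x - 1) < f (bigD d - x - 1 + 1)"
          by (intro high) (auto simp: bigD_def)
        then show ?thesis by (rule mirror_step)
      qed
    qed
  qed
qed

lemma Rset_int: "k \<le> r + 1 \<Longrightarrow> Rset r d lam (int k) = Rbase r d lam k"
proof -
  assume k: "k \<le> r + 1"
  then have "int k div (2 * int r + 2) = 0" "int k mod (2 * int r + 2) = int k" by auto
  with k show ?thesis by (simp add: Rset_def Let_def)
qed

lemma Rset_cases:
  obtains k q where "k \<le> r + 1" "Rset r d lam i = (\<lambda>x. x + q * bigD d) ` Rbase r d lam k"
    | k q where "k \<le> r + 1" "Rset r d lam i = (\<lambda>x. - x + q * bigD d) ` Rbase r d lam k"
proof -
  let ?n = "2 * int r + 2"
  have m: "0 \<le> i mod ?n" "i mod ?n < ?n" by auto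
  show ?thesis
  proof (cases "i mod ?n \<le> int r + 1")
    case True
    then have "nat (i mod ?n) \<le> r + 1" using m by simp
    with True show ?thesis using that(1) by (simp add: Rset_def Let_def)
  next
    case False
    then have "nat (?n - i mod ?n) \<le> r + 1" using m by simp
    with False show ?thesis using that(2) by (simp add: Rset_def Let_def)
  qed
qed

lemma order_pres_on_Rset:
  assumes eo: "shift_equivariant d f" "odd_fun f"
    and base: "\<And>k. k \<le> r + 1 \<Longrightarrow> order_pres_on f (Rbase r d lam k)"
  shows "order_pres_on f (Rset r d lam i)"
proof (cases rule: Rset_cases[of r d lam i])
  case (1 k q)
  then show ?thesis
    using base[OF 1(1)] shift_equivariant_mult[OF eo(1)] by (auto simp: order_pres_on_def)
next
  case (2 k q)
  then show ?thesis
    using base[OF 2(1)] equivariant_odd_neg_shift[OF eo] by (auto simp: order_pres_on_def)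
qed

lemma Rset_closed:
  assumes eo: "shift_equivariant d s" "odd_fun s"
    and base: "\<And>k y. k \<le> r + 1 \<Longrightarrow> y \<in> Rbase r d lam k \<Longrightarrow> s y \<in> Rbase r d lam k"
    and x: "x \<in> Rset r d lam i"
  shows "s x \<in> Rset r d lam i"
proof (cases rule: Rset_cases[of r d lam i])
  case (1 k q)
  then show ?thesis
    using x base[OF 1(1)] shift_equivariant_mult[OF eo(1)] by auto
next
  case (2 k q)
  then show ?thesis
    using x base[OF 2(1)] equivariant_odd_neg_shift[OF eo] by auto
qed

lemma (in simple_refl) refl_maps_interval:
  assumes h: "\<And>p. up p \<Longrightarrow> \<not> (p \<le> hi \<and> hi < p + (b - a)) \<and> \<not> (p < lo \<and> lo \<le> p + (b - a))"
    and y: "y \<in> {lo..hi}"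
  shows "s y \<in> {lo..hi}"
proof -
  consider "up y" | "down y" | "\<not> up y" "\<not> down y" by blast
  then show ?thesis
  proof cases
    case 1
    then show ?thesis using refl_up h y gap_cases by force
  next
    case 2
    then show ?thesis using refl_down h[OF down_shift[OF 2]] y gap_cases by auto
  next
    case 3
    then show ?thesis using refl_other y by simp
  qed
qed

lemma sref_Rbase:
  assumes d: "d \<ge> 2" and S: "(\<Sum>i\<le>r + 1. lam i) = d" and j: "j \<le> d"
    and jJ: "\<forall>i \<le> r. j \<noteq> lam0 lam i" and k: "k \<le> r + 1" and y: "y \<in> Rbase r d lam k"
  shows "sref d j y \<in> Rbase r d lam k"
proof -
  interpret simple_refl d "sref_lo j" "sref_hi d j"
    using simple_refl_sref[OF d j] .
  have last: "lam0 lam r + lam (r + 1) = d" using lam0_last[OF S] .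
  have ge0: "lam 0 \<le> lam0 lam i" for i using lam0_mono[of 0 i lam] by simp
  obtain lo hi where R: "Rbase r d lam k = {lo..hi}" and
    LH: "(k = 0 \<and> lo = - int (lam 0) \<and> hi = int (lam 0))
       \<or> (1 \<le> k \<and> k \<le> r \<and> lo = int (lam0 lam (k - 1)) + 1 \<and> hi = int (lam0 lam k))
       \<or> (k = r + 1 \<and> lo = int d + 1 - int (lam (r + 1)) \<and> hi = int d + 1 + int (lam (r + 1)))"
    using k by (cases "k = 0"; cases "k \<le> r") (auto simp: Rbase_def)
  have f1: "lam 0 \<le> lam0 lam r" "lam0 lam r \<le> d" using ge0 last by auto
  have f2: "1 \<le> k \<Longrightarrow> k \<le> r \<Longrightarrow> lam0 lam (k - 1) \<le> lam0 lam k \<and> lam0 lam k \<le> lam0 lam r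
      \<and> lam 0 \<le> lam0 lam (k - 1) \<and> j \<noteq> lam0 lam (k - 1) \<and> j \<noteq> lam0 lam k"
    using lam0_mono[of "k - 1" k lam] lam0_mono[of k r lam] ge0[of "k - 1"]
      jJ[rule_format, of k] jJ[rule_format, of "k - 1"] by auto
  have f3: "j \<noteq> lam 0" "j \<noteq> lam0 lam r" using jJ[rule_format, of 0] jJ[rule_format, of r] by auto
  have "\<not> (p \<le> hi \<and> hi < p + (sref_hi d j - sref_lo j)) \<and> \<not> (p < lo \<and> lo \<le> p + (sref_hi d j - sref_lo j))"
    if "up p" for p
  proof -
    have W: "(p - sref_lo j \<le> -2 * (2 * int d + 2) \<or> p - sref_lo j = -(2 * int d + 2) \<or> p - sref_lo j = 0
        \<or> p - sref_lo j = 2 * int d + 2 \<or> p - sref_lo j \<ge> 2 * (2 * int d + 2))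
      \<or> (p + sref_hi d j \<le> -2 * (2 * int d + 2) \<or> p + sref_hi d j = -(2 * int d + 2) \<or> p + sref_hi d j = 0
        \<or> p + sref_hi d j = 2 * int d + 2 \<or> p + sref_hi d j \<ge> 2 * (2 * int d + 2))"
      using that bigD_dvd_cases[of d "p - sref_lo j"] bigD_dvd_cases[of d "p + sref_hi d j"]
      unfolding up_def by argo
    consider "j = 0" | "j = d" | "1 \<le> j" "j \<le> d - 1" using j by linarith
    then show ?thesis
    proof cases
      case 1
      then have ab: "sref_lo j = -1" "sref_hi d j = 1" by (simp_all add: sref_lo_def sref_hi_def)
      have "lam 0 \<ge> 1" using f3 1 by simp
      with LH show ?thesis using W ab f1 f2 last by (elim disjE) auto
    next
      case 2
      then have ab: "sref_lo j = int d" "sref_hi d j = int d + 2"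
        using d by (simp_all add: sref_lo_def sref_hi_def)
      have "lam0 lam r < d" using f3 2 f1 by simp
      with LH show ?thesis using W ab f1 f2 last by (elim disjE) auto
    next
      case 3
      then have ab: "sref_lo j = int j" "sref_hi d j = int j + 1"
        using d by (simp_all add: sref_lo_def sref_hi_def)
      from LH show ?thesis using W ab 3 f1 f2 f3 last by (elim disjE) auto
    qed
  qed
  then have "s y \<in> {lo..hi}" using refl_maps_interval y R by blast
  then show ?thesis using sref_eq_affine_refl[OF d j] R by simp
qed

lemma wordprod_Rset:
  assumes d: "d \<ge> 2" and S: "(\<Sum>i\<le>r + 1. lam i) = d"
  shows "set ws \<subseteq> {0..d} - {lam0 lam i |i. i \<le> r} \<Longrightarrow> x \<in> Rset r d lam i
    \<Longrightarrow> wordprod d ws x \<in> Rset r d lam i"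
proof (induction ws arbitrary: x)
  case (Cons j ws)
  then have j: "j \<le> d" "\<forall>i \<le> r. j \<noteq> lam0 lam i" by auto
  have "sref d j \<in> Wgrp d" using sref_in_Wgrp[OF d j(1)] .
  then have "shift_equivariant d (sref d j)" "odd_fun (sref d j)" by (simp_all add: Wgrp_iff)
  with Cons show ?case
    using Rset_closed sref_Rbase[OF d S j] by simp
qed simp

lemma sref_lo_hi_same_block:
  assumes S: "(\<Sum>i\<le>r + 1. lam i) = d" and j: "j \<le> d" and jJ: "\<forall>i \<le> r. j \<noteq> lam0 lam i"
  shows "\<exists>k \<le> r + 1. sref_lo j \<in> Rbase r d lam k \<and> sref_hi d j \<in> Rbase r d lam k"
proof -
  have last: "lam0 lam r + lam (r + 1) = d" using lam0_last[OF S] .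
  have f3: "j \<noteq> lam 0" "j \<noteq> lam0 lam r" using jJ[rule_format, of 0] jJ[rule_format, of r] by auto
  consider "j < lam 0" | "lam0 lam r < j" | "lam 0 < j" "j < lam0 lam r"
    using f3 by linarith
  then show ?thesis
  proof cases
    case 1
    moreover have "lam 0 \<le> d" using last lam0_mono[of 0 r lam] by simp
    ultimately show ?thesis by (intro exI[of _ 0]) (auto simp: sref_lo_def sref_hi_def Rbase_def)
  next
    case 2
    with j last show ?thesis
      by (intro exI[of _ "r + 1"]) (auto simp: sref_lo_def sref_hi_def Rbase_def)
  next
    case 3
    define k where "k = (LEAST i. j < lam0 lam i)"
    have jk: "j < lam0 lam k" unfolding k_def by (rule LeastI[of _ r]) (rule 3(2))
    have kr: "k \<le> r" unfolding k_def by (rule Least_le) (rule 3(2))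
    have k0: "k \<noteq> 0" using jk 3(1) by (metis lam0_0 less_asym k_def)
    have "\<not> j < lam0 lam (k - 1)" unfolding k_def
      by (rule not_less_Least) (use k0 in \<open>simp add: k_def\<close>)
    then have "lam0 lam (k - 1) < j" using jJ kr by (metis diff_le_self le_trans linorder_neqE_nat)
    moreover have "j \<noteq> 0" "j \<noteq> d" using 3 last by auto
    ultimately show ?thesis using jk kr k0
      by (intro exI[of _ k]) (auto simp: sref_lo_def sref_hi_def Rbase_def)
  qed
qed

lemma order_pres_on_less_iff:
  "order_pres_on f S \<Longrightarrow> u \<in> S \<Longrightarrow> v \<in> S \<Longrightarrow> f u < f v \<longleftrightarrow> u < v"
  unfolding order_pres_on_def by (metis less_asym linorder_neqE)

text \<open>If \<open>g\<^sup>-\<^sup>1\<close> is order-preserving on every block, then \<open>g\<^sup>-\<^sup>1\<close> does not change the relative order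
  of \<open>w\<^sup>-\<^sup>1(a\<^sub>j) , w\<^sup>-\<^sup>1(b\<^sub>j)\<close>, which lie in a common block; so \<open>s\<^sub>j w g\<close> and \<open>s\<^sub>j w\<close> gain or lose
  length together.\<close>

lemma inv_count_wordprod_comp:
  assumes d: "d \<ge> 2" and S: "(\<Sum>i\<le>r + 1. lam i) = d" and g: "g \<in> Wgrp d"
    and opc: "\<And>i. order_pres_on (inv g) (Rset r d lam i)"
  shows "set ws \<subseteq> {0..d} - {lam0 lam i |i. i \<le> r}
    \<Longrightarrow> inv_count d (wordprod d ws \<circ> g) = inv_count d (wordprod d ws) + inv_count d g"
proof (induction ws)
  case Nil
  then show ?case using inv_count_id[of d] by (simp add: id_def)
next
  case (Cons j ws)
  let ?w = "wordprod d ws" and ?lo = "sref_lo j" and ?hi = "sref_hi d j"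
  have j: "j \<le> d" "\<forall>i \<le> r. j \<noteq> lam0 lam i" and ws: "set ws \<subseteq> {0..d}"
    using Cons.prems by auto
  have IH: "inv_count d (?w \<circ> g) = inv_count d ?w + inv_count d g"
    by (rule Cons.IH) (use Cons.prems in auto)
  have wW: "?w \<in> Wgrp d" using wordprod_in_Wgrp[OF d ws] .
  have wgW: "?w \<circ> g \<in> Wgrp d" using Wgrp_comp[OF wW g] .
  have inv_wg: "inv (?w \<circ> g) = inv g \<circ> inv ?w"
    using wW g by (intro o_inv_distrib) (simp_all add: Wgrp_iff)
  obtain k where k: "k \<le> r + 1" "?lo \<in> Rbase r d lam k" "?hi \<in> Rbase r d lam k"
    using sref_lo_hi_same_block[OF S j] by blast
  have rev_ws: "set (rev ws) \<subseteq> {0..d} - {lam0 lam i |i. i \<le> r}"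
    using Cons.prems by auto
  have "?lo \<in> Rset r d lam (int k)" "?hi \<in> Rset r d lam (int k)"
    using k Rset_int[OF k(1)] by auto
  then have "inv ?w ?lo \<in> Rset r d lam (int k)" "inv ?w ?hi \<in> Rset r d lam (int k)"
    unfolding inv_wordprod[OF d ws] using wordprod_Rset[OF d S rev_ws] by auto
  then have same_order: "inv (?w \<circ> g) ?lo < inv (?w \<circ> g) ?hi \<longleftrightarrow> inv ?w ?lo < inv ?w ?hi"
    unfolding inv_wg using order_pres_on_less_iff[OF opc] by simp
  have "inv_count d (sref d j \<circ> (?w \<circ> g)) = inv_count d (sref d j \<circ> ?w) + inv_count d g"
  proof (cases "inv ?w ?lo < inv ?w ?hi")
    case True
    then show ?thesis
      using inv_count_sref(1)[OF d j(1) wW] inv_count_sref(1)[OF d j(1) wgW] same_order IH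
      by simp
  next
    case False
    then have "inv ?w ?hi < inv ?w ?lo" "inv (?w \<circ> g) ?hi < inv (?w \<circ> g) ?lo"
      using inv_sref_lo_hi_neq[OF wW, of j] inv_sref_lo_hi_neq[OF wgW, of j] same_order
      by linarith+
    then show ?thesis
      using inv_count_sref(2)[OF d j(1) wW] inv_count_sref(2)[OF d j(1) wgW] same_order IH
      by simp
  qed
  moreover have "wordprod d (j # ws) \<circ> g = sref d j \<circ> (?w \<circ> g)"
    by (simp add: comp_assoc)
  ultimately show ?case by (simp only: wordprod_Cons)
qed

lemma sref_in_Wlam: "j \<le> d \<Longrightarrow> \<forall>i \<le> r. j \<noteq> lam0 lam i \<Longrightarrow> sref d j \<in> Wlam r d lam"
  unfolding Wlam_def Wpar_def by (intro CollectI exI[of _ "[j]"]) auto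

lemma Dlam_imp_order_pres_Rbase:
  assumes d: "d \<ge> 2" and S: "(\<Sum>i\<le>r + 1. lam i) = d" and g: "g \<in> Wgrp d"
    and D: "g \<in> Dlam r d lam" and k: "k \<le> r + 1"
  shows "order_pres_on (inv g) (Rbase r d lam k)"
proof (rule order_pres_on_Rbase[OF S Wgrp_inv[OF g] _ k])
  fix j assume j: "j \<le> d" "\<forall>i \<le> r. j \<noteq> lam0 lam i"
  then have "coxlen d (sref d j \<circ> g) = coxlen d g + 1"
    using D sref_in_Wlam coxlen_sref[OF d j(1)] by (simp add: Dlam_def)
  then have "inv g (sref_lo j) < inv g (sref_hi d j)"
    using coxlen_sref_comp_iff[OF d j(1) g] by simp
  then show "inv g (int j) < inv g (int j + 1)"
    by (rule ascent_imp_step[OF d Wgrp_inv[OF g] j(1)])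
qed

lemma order_pres_Rset_imp_Dlam:
  assumes d: "d \<ge> 2" and S: "(\<Sum>i\<le>r + 1. lam i) = d" and g: "g \<in> Wgrp d"
    and opc: "\<And>i. order_pres_on (inv g) (Rset r d lam i)"
  shows "g \<in> Dlam r d lam"
proof -
  have "coxlen d (w \<circ> g) = coxlen d w + coxlen d g" if w: "w \<in> Wlam r d lam" for w
  proof -
    obtain ws where ws: "set ws \<subseteq> {0..d} - {lam0 lam i |i. i \<le> r}" "w = wordprod d ws"
      using w unfolding Wlam_def Wpar_def by blast
    then have wW: "w \<in> Wgrp d" using wordprod_in_Wgrp[OF d] by auto
    have "inv_count d (w \<circ> g) = inv_count d w + inv_count d g"
      using inv_count_wordprod_comp[OF d S g opc ws(1)] ws(2) by simp
    then show ?thesis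
      using coxlen_eq_inv_count[OF d] wW g Wgrp_comp[OF wW g] by simp
  qed
  with g show ?thesis by (simp add: Dlam_def)
qed

theorem lemma2p2p2:
  fixes r d :: nat and lam :: "nat \<Rightarrow> nat" and g :: "int \<Rightarrow> int"
  assumes "d \<ge> 2"
    and "(\<Sum>i\<le>r + 1. lam i) = d"
    and "g \<in> Wgrp d"
  shows "(g \<in> Dlam r d lam \<longleftrightarrow> (\<forall>i\<in>{0..r + 1}. order_pres_on (inv g) (Rset r d lam (int i))))
       \<and> (g \<in> Dlam r d lam \<longleftrightarrow> (\<forall>i::int. order_pres_on (inv g) (Rset r d lam i)))"
proof -
  have eo: "shift_equivariant d (inv g)" "odd_fun (inv g)"
    using Wgrp_inv[OF assms(3)] by (simp_all add: Wgrp_iff)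
  have base_iff: "(\<forall>i\<in>{0..r + 1}. order_pres_on (inv g) (Rset r d lam (int i)))
      \<longleftrightarrow> (\<forall>k \<le> r + 1. order_pres_on (inv g) (Rbase r d lam k))"
    using Rset_int by auto
  have "g \<in> Dlam r d lam \<Longrightarrow> \<forall>k \<le> r + 1. order_pres_on (inv g) (Rbase r d lam k)"
    using Dlam_imp_order_pres_Rbase[OF assms] by blast
  moreover have "\<forall>k \<le> r + 1. order_pres_on (inv g) (Rbase r d lam k)
      \<Longrightarrow> \<forall>i. order_pres_on (inv g) (Rset r d lam i)"
    using order_pres_on_Rset[OF eo] by blast
  moreover have "\<forall>i. order_pres_on (inv g) (Rset r d lam i) \<Longrightarrow> g \<in> Dlam r d lam"
    using order_pres_Rset_imp_Dlam[OF assms] by blast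
  ultimately show ?thesis using base_iff by blast
qed

end
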